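(* Let $n\geq 2$ be an integer and $t\in[0,1]$, and let \[ \mu_{0}= \frac{(3-2n)t+1-2n+\sqrt{(1-t)[(4n-5)t+4n^2-4n+1]} }{2(n-1)^2}. \] Then \[ -\frac{t}{n}\geq \mu_{0}\geq -\frac{t^2 + (2n+1)t}{n^2-t} \geq -\frac{2}{n-1}t. \] *)

theory Defs
  imports Complex_Main
begin

end

theory Submission imports Defs begin

text \<open>Clearing denominators and the square root turns each inequality into a polynomial
  inequality in \<open>N\<close> and \<open>t\<close>. For the bounds on \<open>\<mu>\<^sub>0\<close> one compares the radicand with the
  square of the amount by which the bound exceeds the rational part of \<open>\<mu>\<^sub>0\<close>: for the upper
  bound the difference is a polynomial in \<open>t\<close> with nonnegative coefficients, for the lower
  bound it factors as \<open>4 t (1 - t) (N - 1)\<^sup>3 (N + 1) (N + t)\<^sup>2\<close>.\<close>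

definition mu_zero :: "real \<Rightarrow> real \<Rightarrow> real" where
  "mu_zero N t = ((3 - 2 * N) * t + 1 - 2 * N
               + sqrt ((1 - t) * ((4 * N - 5) * t + 4 * N^2 - 4 * N + 1)))
             / (2 * (N - 1)^2)"

lemma mu_zero_upper_bound:
  fixes N t :: real
  assumes N: "N \<ge> 2" and t: "0 \<le> t" "t \<le> 1"
  shows "mu_zero N t \<le> - t / N"
proof -
  define R where "R = (1 - t) * ((4 * N - 5) * t + 4 * N^2 - 4 * N + 1)"
  define X where "X = (3 - 2 * N) * t + 1 - 2 * N"
  define A where "A = t * (N - 2) + N * (2 * N - 1)"
  have "A^2 - N^2 * R = t^2 * ((N - 2)^2 + N^2 * (4 * N - 5)) + t * (4 * N * (N - 1)^2 * (N + 1))"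
    unfolding A_def R_def by (simp add: algebra_simps power2_eq_square)
  also have "\<dots> \<ge> 0"
    using N t by (intro add_nonneg_nonneg mult_nonneg_nonneg) auto
  finally have "sqrt (N^2 * R) \<le> A"
    using N t by (intro real_le_lsqrt) (auto simp: A_def)
  moreover have "sqrt (N^2 * R) = N * sqrt R"
    using N by (simp add: real_sqrt_mult)
  ultimately have "N * (X + sqrt R) \<le> - t * (2 * (N - 1)^2)"
    by (simp add: A_def X_def algebra_simps power2_eq_square)
  then show ?thesis
    using N by (simp add: mu_zero_def X_def R_def field_simps)
qed

lemma mu_zero_lower_bound:
  fixes N t :: real
  assumes N: "N \<ge> 2" and t: "0 \<le> t" "t \<le> 1"
  shows "- (t^2 + (2 * N + 1) * t) / (N^2 - t) \<le> mu_zero N t"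
proof -
  define R where "R = (1 - t) * ((4 * N - 5) * t + 4 * N^2 - 4 * N + 1)"
  define X where "X = (3 - 2 * N) * t + 1 - 2 * N"
  define D where "D = 2 * (N - 1)^2"
  define B where "B = (t^2 + (2 * N + 1) * t) / (N^2 - t)"
  have "N^2 \<ge> 2^2" using N by (intro power_mono) auto
  then have den: "N^2 - t > 0" using t by simp
  define C where "C = - (t^2 + (2 * N + 1) * t) * D + ((2 * N - 3) * t + 2 * N - 1) * (N^2 - t)"
  have "B * (N^2 - t) = t^2 + (2 * N + 1) * t"
    using den by (simp add: B_def)
  moreover have "(- B * D - X) * (N^2 - t) = - (B * (N^2 - t)) * D - X * (N^2 - t)"
    by (simp add: algebra_simps)
  ultimately have C: "(- B * D - X) * (N^2 - t) = C"
    by (simp add: C_def X_def algebra_simps)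
  have "(N^2 - t)^2 * R - C^2 = t * (1 - t) * (4 * (N - 1)^3 * (N + 1) * (N + t)^2)"
    unfolding C_def R_def D_def by (simp add: algebra_simps power2_eq_square power3_eq_cube)
  also have "\<dots> \<ge> 0" using N t by (intro mult_nonneg_nonneg) auto
  finally have "(- B * D - X)^2 \<le> R"
    using den C[symmetric] by (simp add: power_mult_distrib mult.commute)
  then have "- B * D \<le> X + sqrt R" using real_le_rsqrt by force
  moreover have "D > 0" using N by (simp add: D_def)
  ultimately have "- B \<le> (X + sqrt R) / D"
    by (simp add: le_divide_eq)
  then show ?thesis
    by (simp only: mu_zero_def B_def X_def R_def D_def minus_divide_left)
qed

lemma rational_bound_ge_linear:
  fixes N t :: real
  assumes N: "N \<ge> 2" and t: "0 \<le> t" "t \<le> 1"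
  shows "- (2 / (N - 1)) * t \<le> - (t^2 + (2 * N + 1) * t) / (N^2 - t)"
proof -
  have "N^2 \<ge> 2^2" using N by (intro power_mono) auto
  then have den: "N^2 - t > 0" using t by simp
  have "2 * t * (N^2 - t) - (t^2 + (2 * N + 1) * t) * (N - 1) = t * (1 - t) * (N + 1)"
    by (simp add: algebra_simps power2_eq_square)
  also have "\<dots> \<ge> 0" using N t by simp
  finally have "(t^2 + (2 * N + 1) * t) * (N - 1) \<le> 2 * t * (N^2 - t)" by simp
  then have "(t^2 + (2 * N + 1) * t) / (N^2 - t) \<le> 2 / (N - 1) * t"
    using N den by (simp add: divide_le_eq le_divide_eq mult.commute)
  then show ?thesis by (simp only: minus_divide_left mult_minus_left neg_le_iff_le)
qed

theorem proposition5p2: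
  fixes n :: nat and t mu0 :: real
  assumes "n \<ge> 2" and "0 \<le> t" and "t \<le> 1"
    and "mu0 = ((3 - 2 * real n) * t + 1 - 2 * real n
                + sqrt ((1 - t) * ((4 * real n - 5) * t + 4 * (real n)^2 - 4 * real n + 1)))
               / (2 * (real n - 1)^2)"
  shows "- t / real n \<ge> mu0
         \<and> mu0 \<ge> - (t^2 + (2 * real n + 1) * t) / ((real n)^2 - t)
         \<and> - (t^2 + (2 * real n + 1) * t) / ((real n)^2 - t) \<ge> - (2 / (real n - 1)) * t"
proof -
  have N: "real n \<ge> 2" using assms(1) by simp
  have "mu0 = mu_zero (real n) t" using assms(4) by (simp add: mu_zero_def)
  then show ?thesis
    using mu_zero_upper_bound[OF N] mu_zero_lower_bound[OF N] rational_bound_ge_linear[OF N]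
      assms(2,3)
    by simp
qed

end
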